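(* Let $n\ge4$ be even. For each $1\le j\le n-1$, the map $\nu_j:Y_1\to Y_j$, $x\mapsto\sigma_jx\sigma_j^{-1}$, is an order-preserving one-to-one mapping (with respect to the Bruhat order of $\mathcal F_n$ restricted to $Y_1$ and $Y_j$).
   Context: $s_i=(i,i+1)$; permutations compose right to left. $\mathcal F_m$ is the set of fixed-point-free involutions in $S_m$ with conjugation action, height $\ell/2$, and Bruhat order the weakest partial order with $z\le tzt$ for transpositions $t$ with $\ell(z)\le\ell(tzt)$. Regard $\mathcal F_{n-2}\subset S_n$; $w_0$ longest element of $S_n$; $Y_1=\{w_0zs_{n-1}w_0:z\in\mathcal F_{n-2}\}$; $\sigma_j=s_js_{j-1}\cdots s_1$; $Y_j=\sigma_jY_1\sigma_j^{-1}$. *)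

theory Defs
  imports "HOL-Combinatorics.Combinatorics"
begin

text \<open>Permutations of {1..n} are functions nat => nat (permuting {1..n}, identity elsewhere);
  composition is right to left (function composition).\<close>

definition simple_refl :: "nat \<Rightarrow> nat \<Rightarrow> nat" where
  "simple_refl i = transpose i (Suc i)"

definition perm_length :: "nat \<Rightarrow> (nat \<Rightarrow> nat) \<Rightarrow> nat" where
  "perm_length n w = card {(i, j). 1 \<le> i \<and> i < j \<and> j \<le> n \<and> w j < w i}"

definition fpf_inv :: "nat \<Rightarrow> (nat \<Rightarrow> nat) set" where
  "fpf_inv m = {z. z permutes {1..m} \<and> (\<forall>i\<in>{1..m}. z (z i) = i \<and> z i \<noteq> i)}"

definition longest :: "nat \<Rightarrow> nat \<Rightarrow> nat" where
  "longest n = (\<lambda>i. if 1 \<le> i \<and> i \<le> n then n + 1 - i else i)"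

definition bruhat_step :: "nat \<Rightarrow> (nat \<Rightarrow> nat) \<Rightarrow> (nat \<Rightarrow> nat) \<Rightarrow> bool" where
  "bruhat_step n z z' \<longleftrightarrow> z \<in> fpf_inv n \<and>
     (\<exists>a b. a \<in> {1..n} \<and> b \<in> {1..n} \<and> a \<noteq> b \<and> z' = transpose a b \<circ> z \<circ> transpose a b) \<and>
     perm_length n z \<le> perm_length n z'"

definition fpf_bruhat :: "nat \<Rightarrow> (nat \<Rightarrow> nat) \<Rightarrow> (nat \<Rightarrow> nat) \<Rightarrow> bool" where
  "fpf_bruhat n x y \<longleftrightarrow> x \<in> fpf_inv n \<and> y \<in> fpf_inv n \<and> (bruhat_step n)\<^sup>*\<^sup>* x y"

definition Y1 :: "nat \<Rightarrow> (nat \<Rightarrow> nat) set" where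
  "Y1 n = {longest n \<circ> z \<circ> simple_refl (n - 1) \<circ> longest n | z. z \<in> fpf_inv (n - 2)}"

fun sigma :: "nat \<Rightarrow> nat \<Rightarrow> nat" where
  "sigma 0 = id"
| "sigma (Suc j) = simple_refl (Suc j) \<circ> sigma j"

definition nu :: "nat \<Rightarrow> (nat \<Rightarrow> nat) \<Rightarrow> (nat \<Rightarrow> nat)" where
  "nu j x = sigma j \<circ> x \<circ> inv (sigma j)"

definition Yj :: "nat \<Rightarrow> nat \<Rightarrow> (nat \<Rightarrow> nat) set" where
  "Yj n j = (\<lambda>x. sigma j \<circ> x \<circ> inv (sigma j)) ` Y1 n"

end

theory Submission
  imports Defs
begin

text \<open>Every element of \<open>Y\<^sub>1\<close> is a fixed-point-free involution pairing 1 with 2. A Bruhat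
  step \<open>z \<le> tzt\<close> never lowers the partner \<open>z 1\<close> of 1: if it did, \<open>t\<close> would rematch the four
  points \<open>1, z 1, b, z b\<close> in a way that strictly shortens \<open>z\<close>. Hence a Bruhat chain between two
  elements of \<open>Y\<^sub>1\<close> runs through involutions pairing 1 with 2 only. For such \<open>u\<close>, each factor
  \<open>s\<^sub>2, \<dots>, s\<^sub>j\<close> of \<open>\<sigma>\<^sub>j\<close> adds exactly two inversions, so \<open>\<ell>(\<nu>\<^sub>j u) = \<ell>(u) + 2(j - 1)\<close>;
  and \<open>\<nu>\<^sub>j\<close> turns conjugation by \<open>(a b)\<close> into conjugation by the transposition of \<open>\<sigma>\<^sub>j a\<close> and
  \<open>\<sigma>\<^sub>j b\<close>. So \<open>\<nu>\<^sub>j\<close> maps Bruhat steps to Bruhat steps.\<close>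

definition inversions :: "nat \<Rightarrow> (nat \<Rightarrow> nat) \<Rightarrow> (nat \<times> nat) set" where
  "inversions n w = {(i, j). 1 \<le> i \<and> i < j \<and> j \<le> n \<and> w j < w i}"

lemma perm_length_eq_card_inversions: "perm_length n w = card (inversions n w)"
  unfolding perm_length_def inversions_def ..

lemma finite_inversions: "finite (inversions n w)"
  by (rule finite_subset[of _ "{1..n} \<times> {1..n}"]) (auto simp: inversions_def)

definition swap_outside :: "nat \<Rightarrow> nat \<Rightarrow> nat \<times> nat \<Rightarrow> nat \<times> nat" where
  "swap_outside i j = (\<lambda>(p, q). if p \<in> {i..j} \<and> q \<in> {i..j} then (p, q)
     else (transpose i j p, transpose i j q))"

lemma swap_outside_swap_outside: "i \<le> j \<Longrightarrow> swap_outside i j (swap_outside i j pq) = pq"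
  by (cases pq) (auto simp: swap_outside_def transpose_def)

lemma inj_swap_outside: "i \<le> j \<Longrightarrow> inj (swap_outside i j)"
  by (metis injI swap_outside_swap_outside)

lemma swap_outside_in_inversions:
  assumes "1 \<le> i" "i < j" "j \<le> n" "w i < w j" "pq \<in> inversions n w"
  shows "swap_outside i j pq \<in> inversions n (w \<circ> transpose i j) - {(i, j)}"
  using assms by (cases pq) (auto simp: swap_outside_def inversions_def transpose_def)

lemma perm_length_less_compose_transpose:
  assumes "1 \<le> i" "i < j" "j \<le> n" "w i < w j"
  shows "perm_length n w < perm_length n (w \<circ> transpose i j)"
proof -
  have "card (inversions n w) = card (swap_outside i j ` inversions n w)"
    by (rule card_image[symmetric], rule inj_on_subset[OF inj_swap_outside]) (use assms in auto)
  also have "\<dots> \<le> card (inversions n (w \<circ> transpose i j) - {(i, j)})"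
    by (rule card_mono[OF finite_Diff[OF finite_inversions]])
      (intro image_subsetI swap_outside_in_inversions[OF assms])
  also have "\<dots> < card (inversions n (w \<circ> transpose i j))"
    by (rule card_Diff1_less[OF finite_inversions]) (use assms in \<open>auto simp: inversions_def\<close>)
  finally show ?thesis by (simp add: perm_length_eq_card_inversions)
qed

lemma perm_length_compose_adjacent:
  assumes "1 \<le> i" "Suc i \<le> n" "w i < w (Suc i)"
  shows "perm_length n (w \<circ> transpose i (Suc i)) = Suc (perm_length n w)"
proof -
  let ?v = "w \<circ> transpose i (Suc i)" and ?f = "swap_outside i (Suc i)"
  have "?f ` inversions n w = inversions n ?v - {(i, Suc i)}"
  proof
    show "?f ` inversions n w \<subseteq> inversions n ?v - {(i, Suc i)}"
      by (intro image_subsetI swap_outside_in_inversions) (use assms in auto)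
    show "inversions n ?v - {(i, Suc i)} \<subseteq> ?f ` inversions n w"
    proof
      fix pq assume "pq \<in> inversions n ?v - {(i, Suc i)}"
      then have "?f pq \<in> inversions n w"
        using assms by (cases pq) (auto simp: swap_outside_def inversions_def transpose_def)
      moreover have "pq = ?f (?f pq)" by (simp add: swap_outside_swap_outside)
      ultimately show "pq \<in> ?f ` inversions n w" by blast
    qed
  qed
  then have "card (inversions n w) = card (inversions n ?v - {(i, Suc i)})"
    by (metis card_image inj_on_subset inj_swap_outside le_SucI order_refl subset_UNIV)
  moreover have "(i, Suc i) \<in> inversions n ?v"
    using assms by (auto simp: inversions_def)
  ultimately show ?thesis
    using card_Suc_Diff1[OF finite_inversions] by (metis perm_length_eq_card_inversions)
qed

lemma perm_length_adjacent_compose: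
  assumes inj: "inj_on v {1..n}" and pq: "p \<in> {1..n}" "q \<in> {1..n}" "p < q"
    and v: "v p = i" "v q = Suc i"
  shows "perm_length n (transpose i (Suc i) \<circ> v) = Suc (perm_length n v)"
proof -
  let ?t = "transpose i (Suc i)"
  have "?t (v b) < ?t (v a) \<longleftrightarrow> v b < v a \<or> (a, b) = (p, q)"
    if "a \<in> {1..n}" "b \<in> {1..n}" "a < b" for a b
  proof -
    consider "v a = i" "v b = Suc i" | "v a = Suc i" "v b = i"
      | "\<not> (v a = i \<and> v b = Suc i)" "\<not> (v a = Suc i \<and> v b = i)" by blast
    then show ?thesis
    proof cases
      case 1
      then have "a = p" "b = q" using inj pq that v by (metis inj_onD)+
      with 1 show ?thesis by simp
    next
      case 2
      then have "a = q" "b = p" using inj pq that v by (metis inj_onD)+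
      then show ?thesis using pq(3) that(3) by auto
    next
      case 3
      then have "(a, b) \<noteq> (p, q)" using v by auto
      moreover have "v a \<noteq> v b" using inj that by (metis inj_onD less_irrefl)
      ultimately show ?thesis using 3 by (auto simp: transpose_def)
    qed
  qed
  then have "inversions n (?t \<circ> v) = insert (p, q) (inversions n v)"
    using pq by (auto simp: inversions_def)
  moreover have "(p, q) \<notin> inversions n v" using v by (auto simp: inversions_def)
  ultimately show ?thesis by (simp add: perm_length_eq_card_inversions finite_inversions)
qed

lemma fpf_inv_permutes: "z \<in> fpf_inv n \<Longrightarrow> z permutes {1..n}"
  by (simp add: fpf_inv_def)

lemma fpf_inv_neq: "z \<in> fpf_inv n \<Longrightarrow> x \<in> {1..n} \<Longrightarrow> z x \<noteq> x"
  by (simp add: fpf_inv_def)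

lemma fpf_inv_in: "z \<in> fpf_inv n \<Longrightarrow> x \<in> {1..n} \<Longrightarrow> z x \<in> {1..n}"
  by (metis fpf_inv_permutes permutes_in_image)

lemma fpf_inv_involution: "z \<in> fpf_inv n \<Longrightarrow> z (z x) = x"
  by (cases "x \<in> {1..n}") (auto simp: fpf_inv_def permutes_not_in)

lemma fpf_inv_conj:
  assumes f: "f \<in> fpf_inv n" and g: "g permutes {1..n}"
  shows "g \<circ> f \<circ> inv g \<in> fpf_inv n"
proof -
  have "g (f (inv g i)) \<noteq> i" if "i \<in> {1..n}" for i
    using fpf_inv_neq[OF f] permutes_in_image[OF permutes_inv[OF g]] that
    by (metis g permutes_inverses(2))
  moreover have "g (f (inv g (g (f (inv g i))))) = i" for i
    using g fpf_inv_involution[OF f] by (simp add: permutes_inverses)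
  moreover have "g \<circ> f \<circ> inv g permutes {1..n}"
    using g fpf_inv_permutes[OF f] by (intro permutes_compose permutes_inv)
  ultimately show ?thesis by (simp add: fpf_inv_def)
qed

lemma perm_length_conj_adjacent:
  assumes w: "w \<in> fpf_inv n" and i: "1 \<le> i" "Suc i \<le> n" and lt: "w i < w (Suc i)"
  shows "perm_length n (transpose i (Suc i) \<circ> w \<circ> transpose i (Suc i)) = perm_length n w + 2"
proof -
  let ?s = "transpose i (Suc i)"
  have ww: "w (w x) = x" for x using fpf_inv_involution[OF w] .
  have "w i \<noteq> i" "w (Suc i) \<noteq> Suc i" using fpf_inv_neq[OF w] i by auto
  then have out: "w i \<notin> {i, Suc i}" "w (Suc i) \<notin> {i, Suc i}"
    using lt ww[of i] ww[of "Suc i"] by auto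
  have "perm_length n (w \<circ> ?s) = Suc (perm_length n w)"
    using perm_length_compose_adjacent[OF i lt] .
  moreover have "perm_length n (?s \<circ> (w \<circ> ?s)) = Suc (perm_length n (w \<circ> ?s))"
  proof (rule perm_length_adjacent_compose)
    show "inj_on (w \<circ> ?s) {1..n}"
      using fpf_inv_permutes[OF w] i
      by (intro inj_on_subset[OF permutes_inj] permutes_compose permutes_swap_id) auto
    show "w i \<in> {1..n}" "w (Suc i) \<in> {1..n}" using fpf_inv_in[OF w] i by auto
    show "(w \<circ> ?s) (w i) = i" "(w \<circ> ?s) (w (Suc i)) = Suc i"
      using out ww by auto
  qed (fact lt)
  ultimately show ?thesis by (simp add: o_assoc)
qed

lemma card_eq_4_sorted:
  fixes S :: "'a::linorder set"
  assumes "finite S" "card S = 4"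
  obtains a b c d where "a < b" "b < c" "c < d" "S = {a, b, c, d}"
proof -
  define xs where "xs = sorted_list_of_set S"
  have "length xs = 4" using assms by (simp add: xs_def)
  then obtain a b c d where "xs = [a, b, c, d]"
    by (auto simp: numeral_eq_Suc length_Suc_conv)
  then have "sorted_wrt (<) [a, b, c, d]" "set [a, b, c, d] = S"
    using assms(1) unfolding xs_def by (metis sorted_list_of_set.strict_sorted_key_list_of_set,
        metis sorted_list_of_set.set_sorted_key_list_of_set)
  then show ?thesis using that by auto
qed

definition fpf_inv_on :: "nat set \<Rightarrow> (nat \<Rightarrow> nat) \<Rightarrow> bool" where
  "fpf_inv_on S z \<longleftrightarrow> (\<forall>x\<in>S. z x \<in> S \<and> z (z x) = x \<and> z x \<noteq> x)"

lemma fpf_inv_on_four: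
  assumes z: "fpf_inv_on S z" and S: "S = {a, b, c, d}" "distinct [a, b, c, d]" and za: "z a = b"
  shows "z b = a" "z c = d" "z d = c"
proof -
  have z': "\<forall>x\<in>{a, b, c, d}. z x \<in> {a, b, c, d} \<and> z (z x) = x \<and> z x \<noteq> x"
    using z unfolding fpf_inv_on_def S(1) .
  show zb: "z b = a" using z' za by force
  show zc: "z c = d" using z' za zb S(2) by (metis distinct_length_2_or_more insert_iff singletonD)
  show "z d = c" using z' zc by force
qed

lemma perm_length_less_cross:
  assumes abcd: "1 \<le> a" "a < b" "b < c" "c < d" "d \<le> n"
    and w: "w a = b" "w b = a" "w c = d" "w d = c"
    and v: "v a = c" "v c = a" "v b = d" "v d = b"
    and agree: "\<forall>x. x \<notin> {a, b, c, d} \<longrightarrow> v x = w x"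
  shows "perm_length n w < perm_length n v"
proof -
  have "v = w \<circ> transpose b c \<circ> transpose a d"
    using abcd w v agree by (auto simp: fun_eq_iff transpose_def)
  moreover have "perm_length n w < perm_length n (w \<circ> transpose b c)"
    by (rule perm_length_less_compose_transpose) (use abcd w in auto)
  moreover have "\<dots> < perm_length n (w \<circ> transpose b c \<circ> transpose a d)"
    by (rule perm_length_less_compose_transpose) (use abcd w in auto)
  ultimately show ?thesis by simp
qed

lemma perm_length_less_nest:
  assumes abcd: "1 \<le> a" "a < b" "b < c" "c < d" "d \<le> n"
    and w: "w a = c" "w c = a" "w b = d" "w d = b"
    and v: "v a = d" "v d = a" "v b = c" "v c = b"
    and agree: "\<forall>x. x \<notin> {a, b, c, d} \<longrightarrow> v x = w x"
  shows "perm_length n w < perm_length n v"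
proof -
  have "v = w \<circ> transpose c d \<circ> transpose a b"
    using abcd w v agree by (auto simp: fun_eq_iff transpose_def)
  moreover have "perm_length n w < perm_length n (w \<circ> transpose c d)"
    by (rule perm_length_less_compose_transpose) (use abcd w in auto)
  moreover have "\<dots> < perm_length n (w \<circ> transpose c d \<circ> transpose a b)"
    by (rule perm_length_less_compose_transpose) (use abcd w in auto)
  ultimately show ?thesis by simp
qed

lemma perm_length_less_rematch:
  assumes S: "finite S" "card S = 4" "S \<subseteq> {1..n}"
    and z: "fpf_inv_on S z" and z': "fpf_inv_on S z'"
    and agree: "\<forall>x. x \<notin> S \<longrightarrow> z x = z' x"
    and lt: "z' (Min S) < z (Min S)"
  shows "perm_length n z' < perm_length n z"
proof -
  obtain a b c d where abcd: "a < b" "b < c" "c < d" and S_abcd: "S = {a, b, c, d}"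
    using card_eq_4_sorted[OF S(1,2)] .
  have range: "1 \<le> a" "d \<le> n" using S(3) S_abcd by auto
  have abcd': "distinct [a, b, c, d]" "S = {a, c, b, d}" "distinct [a, c, b, d]"
    "S = {a, d, b, c}" "distinct [a, d, b, c]"
    using abcd S_abcd by auto
  have agree': "\<forall>x. x \<notin> {a, b, c, d} \<longrightarrow> z x = z' x" using agree S_abcd by simp
  have "Min S = a" using S_abcd abcd by (auto intro: Min_eqI)
  then have "z' a < z a" using lt by simp
  moreover have "z a \<in> {b, c, d}" "z' a \<in> {b, c, d}"
    using z z' S_abcd by (auto simp: fpf_inv_on_def)
  ultimately consider (ab_ac) "z' a = b" "z a = c" | (ab_ad) "z' a = b" "z a = d"
    | (ac_ad) "z' a = c" "z a = d"
    using abcd by auto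
  then show ?thesis
  proof cases
    case ab_ac
    show ?thesis
      using fpf_inv_on_four[OF z' S_abcd abcd'(1) ab_ac(1)] fpf_inv_on_four[OF z abcd'(2,3) ab_ac(2)]
      by (intro perm_length_less_cross[OF range(1) abcd range(2)] ab_ac agree')
  next
    case ab_ad
    \<comment> \<open>pass through the crossing matching \<open>(a c)(b d)\<close>\<close>
    define u where "u = z'(a := c, b := d, c := a, d := b)"
    have "perm_length n z' < perm_length n u"
      using fpf_inv_on_four[OF z' S_abcd abcd'(1) ab_ad(1)] abcd
      by (intro perm_length_less_cross[OF range(1) abcd range(2)]) (auto simp: u_def ab_ad)
    also have "\<dots> < perm_length n z"
      using fpf_inv_on_four[OF z abcd'(4,5) ab_ad(2)] abcd agree'
      by (intro perm_length_less_nest[OF range(1) abcd range(2)]) (auto simp: u_def ab_ad)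
    finally show ?thesis .
  next
    case ac_ad
    show ?thesis
      using fpf_inv_on_four[OF z' abcd'(2,3) ac_ad(1)] fpf_inv_on_four[OF z abcd'(4,5) ac_ad(2)]
      by (intro perm_length_less_nest[OF range(1) abcd range(2)] ac_ad agree')
  qed
qed

lemma perm_length_less_conj_transpose:
  assumes z: "z \<in> fpf_inv n" and a: "a \<in> {1, z 1}" and b: "b \<in> {1..n}" "b \<notin> {1, z 1}"
    and lt: "(transpose a b \<circ> z \<circ> transpose a b) 1 < z 1"
  shows "perm_length n (transpose a b \<circ> z \<circ> transpose a b) < perm_length n z"
proof -
  let ?t = "transpose a b"
  let ?z' = "?t \<circ> z \<circ> ?t"
  define S where "S = {1, z 1, b, z b}"
  have zz: "z (z x) = x" for x using fpf_inv_involution[OF z] .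
  have one: "1 \<in> {1..n}" using b by auto
  have S_sub: "S \<subseteq> {1..n}" using fpf_inv_in[OF z] one b(1) by (auto simp: S_def)
  have "z 1 \<noteq> 1" "z b \<noteq> b" using fpf_inv_neq[OF z] one b(1) by auto
  moreover have "z b \<noteq> 1" "z b \<noteq> z 1" using b(2) zz by (metis insertCI)+
  ultimately have "card S = 4" using b(2) by (auto simp: S_def)
  have zS: "z x \<in> S" if "x \<in> S" for x using that zz by (auto simp: S_def)
  have tS: "?t x \<in> S" if "x \<in> S" for x using that a by (auto simp: S_def transpose_def)
  have on_z: "fpf_inv_on S z" using zS fpf_inv_neq[OF z] S_sub zz by (auto simp: fpf_inv_on_def)
  have on_z': "fpf_inv_on S ?z'"
    unfolding fpf_inv_on_def
  proof (intro ballI conjI)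
    fix x assume x: "x \<in> S"
    show "?z' x \<in> S" using x zS tS by simp
    show "?z' (?z' x) = x" by (simp add: zz)
    have "z (?t x) \<noteq> ?t x" using fpf_inv_neq[OF z] tS x S_sub by blast
    then show "?z' x \<noteq> x" by (metis comp_apply transpose_involutory)
  qed
  have agree: "\<forall>x. x \<notin> S \<longrightarrow> z x = ?z' x"
  proof (intro allI impI)
    fix x assume "x \<notin> S"
    then have "z x \<notin> S" using zS zz by metis
    then have "x \<notin> {a, b}" "z x \<notin> {a, b}" using \<open>x \<notin> S\<close> a by (auto simp: S_def)
    then show "z x = ?z' x" by simp
  qed
  have "Min S = 1" using S_sub by (intro Min_eqI) (auto simp: S_def)
  then show ?thesis
    using perm_length_less_rematch[OF _ \<open>card S = 4\<close> S_sub on_z on_z' agree] lt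
    by (simp only: S_def finite.emptyI finite_insert)
qed

lemma bruhat_step_fpf_inv: "bruhat_step n z z' \<Longrightarrow> z' \<in> fpf_inv n"
  unfolding bruhat_step_def
  by (metis fpf_inv_conj inv_transpose_eq permutes_swap_id)

lemma bruhat_step_apply_1_le:
  assumes "bruhat_step n z z'"
  shows "z 1 \<le> z' 1"
proof (rule ccontr)
  obtain a b where z: "z \<in> fpf_inv n" and ab: "a \<in> {1..n}" "b \<in> {1..n}" "a \<noteq> b"
    and z': "z' = transpose a b \<circ> z \<circ> transpose a b" and len: "perm_length n z \<le> perm_length n z'"
    using assms by (auto simp: bruhat_step_def)
  assume "\<not> z 1 \<le> z' 1"
  then have lt: "z' 1 < z 1" by simp
  have zz: "z (z x) = x" for x using fpf_inv_involution[OF z] .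
  have "z' 1 = z 1" if "a \<in> {1, z 1} \<longleftrightarrow> b \<in> {1, z 1}"
    using that ab(3) zz[of 1] by (auto simp: z' transpose_def)
  then consider "a \<in> {1, z 1}" "b \<notin> {1, z 1}" | "b \<in> {1, z 1}" "a \<notin> {1, z 1}" | "z' 1 = z 1"
    by blast
  then show False
  proof cases
    case 1
    then show False
      using perm_length_less_conj_transpose[OF z 1(1) ab(2) 1(2)] lt len z' by simp
  next
    case 2
    then show False
      using perm_length_less_conj_transpose[OF z 2(1) ab(1) 2(2)] lt len z'
      by (simp add: transpose_commute)
  qed (use lt in simp)
qed

lemma sigma_apply:
  "sigma j i = (if i = 1 then Suc j else if 2 \<le> i \<and> i \<le> Suc j then i - 1 else i)"
  by (induction j arbitrary: i) (auto simp: simple_refl_def transpose_def)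

lemma sigma_permutes: "sigma j permutes {1..Suc j}"
proof (induction j)
  case 0
  show ?case unfolding sigma.simps by (rule permutes_id)
next
  case (Suc j)
  have "sigma j permutes {1..Suc (Suc j)}"
    using Suc.IH by (rule permutes_subset) auto
  moreover have "simple_refl (Suc j) permutes {1..Suc (Suc j)}"
    unfolding simple_refl_def by (rule permutes_swap_id) auto
  ultimately show ?case unfolding sigma.simps by (rule permutes_compose)
qed

lemma bij_sigma: "bij (sigma j)"
  using permutes_bij[OF sigma_permutes] .

lemma sigma_permutes_atLeastAtMost: "j < n \<Longrightarrow> sigma j permutes {1..n}"
  by (rule permutes_subset[OF sigma_permutes]) auto

lemma nu_Suc: "nu (Suc j) u = simple_refl (Suc j) \<circ> nu j u \<circ> simple_refl (Suc j)"
  by (simp add: nu_def o_inv_distrib bij_sigma simple_refl_def o_assoc)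

lemma nu_fpf_inv:
  assumes "u \<in> fpf_inv n" "j < n"
  shows "nu j u \<in> fpf_inv n"
  unfolding nu_def by (rule fpf_inv_conj[OF assms(1) sigma_permutes_atLeastAtMost[OF assms(2)]])

lemma nu_apply_Suc:
  assumes "1 \<le> j" "u 1 = 2"
  shows "nu j u (Suc j) = 1"
proof -
  have "inv (sigma j) (Suc j) = 1"
    by (rule inv_f_eq[OF bij_is_inj[OF bij_sigma]]) (simp add: sigma_apply)
  then show ?thesis using assms by (simp add: nu_def sigma_apply)
qed

lemma transpose_conj_eq:
  assumes "inj u" "u a = b" "u b = a"
  shows "transpose a b \<circ> u \<circ> transpose a b = u"
proof
  fix x
  have "u x = a \<longleftrightarrow> x = b" "u x = b \<longleftrightarrow> x = a"
    using assms by (metis injD)+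
  then show "(transpose a b \<circ> u \<circ> transpose a b) x = u x"
    using assms(2,3) by (auto simp: transpose_def)
qed

lemma nu_1:
  assumes "u \<in> fpf_inv n" "u 1 = 2"
  shows "nu 1 u = u"
proof -
  have "u 2 = 1" using assms fpf_inv_involution by metis
  then have "transpose 1 2 \<circ> u \<circ> transpose 1 2 = u"
    using permutes_inj[OF fpf_inv_permutes[OF assms(1)]] assms(2) by (intro transpose_conj_eq)
  moreover have "nu 0 u = u" by (simp add: nu_def)
  ultimately show ?thesis by (simp add: nu_Suc[of 0] simple_refl_def numeral_2_eq_2)
qed

lemma perm_length_nu:
  assumes u: "u \<in> fpf_inv n" "u 1 = 2" and j: "1 \<le> j" "j < n"
  shows "perm_length n (nu j u) = perm_length n u + 2 * (j - 1)"
  using j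
proof (induction j rule: nat_induct_at_least)
  case base
  then show ?case using nu_1[OF u] by simp
next
  case (Suc j)
  let ?w = "nu j u"
  have w: "?w \<in> fpf_inv n" using nu_fpf_inv[OF u(1)] Suc.prems by simp
  have "?w (Suc j) = 1" using \<open>1 \<le> j\<close> u(2) by (rule nu_apply_Suc)
  moreover have "?w (Suc (Suc j)) \<noteq> ?w (Suc j)"
    using permutes_inj[OF fpf_inv_permutes[OF w]] by (metis injD n_not_Suc_n)
  moreover have "?w (Suc (Suc j)) \<in> {1..n}" using fpf_inv_in[OF w] Suc.prems by simp
  ultimately have lt: "?w (Suc j) < ?w (Suc (Suc j))" by simp
  have "perm_length n (nu (Suc j) u) = perm_length n ?w + 2"
    unfolding nu_Suc simple_refl_def
    by (rule perm_length_conj_adjacent[OF w _ _ lt]) (use Suc in auto)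
  then show ?case using Suc by simp
qed

lemma conj_transpose:
  assumes "bij g"
  shows "g \<circ> (transpose a b \<circ> u \<circ> transpose a b) \<circ> inv g
    = transpose (g a) (g b) \<circ> (g \<circ> u \<circ> inv g) \<circ> transpose (g a) (g b)"
proof -
  have "transpose (g a) (g b) (g y) = g (transpose a b y)" for y
    using transpose_apply_commute[OF assms] by (simp add: bij_is_inj[OF assms])
  moreover have "transpose a b (inv g x) = inv g (transpose (g a) (g b) x)" for x
    using transpose_apply_commute[OF bij_imp_bij_inv[OF assms]] by (simp add: inv_inv_eq[OF assms])
  ultimately show ?thesis by (simp add: fun_eq_iff)
qed

lemma nu_bruhat_step:
  assumes st: "bruhat_step n u v" and u1: "u 1 = 2" and v1: "v 1 = 2" and j: "1 \<le> j" "j < n"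
  shows "bruhat_step n (nu j u) (nu j v)"
proof -
  obtain a b where u: "u \<in> fpf_inv n" and ab: "a \<in> {1..n}" "b \<in> {1..n}" "a \<noteq> b"
    and v: "v = transpose a b \<circ> u \<circ> transpose a b" and len: "perm_length n u \<le> perm_length n v"
    using st by (auto simp: bruhat_step_def)
  have "sigma j a \<in> {1..n}" "sigma j b \<in> {1..n}"
    using ab permutes_in_image[OF sigma_permutes_atLeastAtMost[OF j(2)]] by auto
  moreover have "sigma j a \<noteq> sigma j b"
    using ab(3) bij_is_inj[OF bij_sigma] by (auto dest: injD)
  moreover have
    "nu j v = transpose (sigma j a) (sigma j b) \<circ> nu j u \<circ> transpose (sigma j a) (sigma j b)"
    unfolding nu_def v by (rule conj_transpose[OF bij_sigma])
  moreover have "perm_length n (nu j u) \<le> perm_length n (nu j v)"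
    using perm_length_nu[OF u u1 j] perm_length_nu[OF bruhat_step_fpf_inv[OF st] v1 j] len by simp
  ultimately show ?thesis
    using nu_fpf_inv[OF u j(2)] unfolding bruhat_step_def by blast
qed

lemma rtranclp_bruhat_step_nu:
  assumes "(bruhat_step n)\<^sup>*\<^sup>* x y" "y 1 = 2" and j: "1 \<le> j" "j < n"
  shows "(bruhat_step n)\<^sup>*\<^sup>* (nu j x) (nu j y)"
  using assms(1,2)
proof (induction rule: rtranclp_induct)
  case base
  show ?case by simp
next
  case (step u v)
  have u: "u \<in> fpf_inv n" using step.hyps(2) by (simp add: bruhat_step_def)
  have "u 1 \<in> {1..n}" "u 1 \<noteq> 1" using fpf_inv_in[OF u] fpf_inv_neq[OF u] j by auto
  moreover have "u 1 \<le> 2" using bruhat_step_apply_1_le[OF step.hyps(2)] step.prems by simp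
  ultimately have "u 1 = 2" by simp
  then show ?case
    using step.IH nu_bruhat_step[OF step.hyps(2) _ step.prems j]
    by (simp add: rtranclp.rtrancl_into_rtrancl)
qed

lemma Y1_apply_1:
  assumes "2 \<le> n" "y \<in> Y1 n"
  shows "y 1 = 2"
proof -
  obtain z where z: "z \<in> fpf_inv (n - 2)"
    and y: "y = longest n \<circ> z \<circ> simple_refl (n - 1) \<circ> longest n"
    using assms(2) by (auto simp: Y1_def)
  have "n - 1 \<notin> {1..n - 2}" using assms(1) by auto
  then have "z (n - 1) = n - 1" by (rule permutes_not_in[OF fpf_inv_permutes[OF z]])
  then show ?thesis using assms(1) by (auto simp: y longest_def simple_refl_def)
qed

lemma inj_nu: "inj (nu j)"
proof (rule injI)
  fix x y assume "nu j x = nu j y"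
  then have "inv (sigma j) \<circ> nu j x \<circ> sigma j = inv (sigma j) \<circ> nu j y \<circ> sigma j" by simp
  then show "x = y"
    using bij_sigma by (simp add: nu_def o_assoc bij_is_inj bij_is_surj surj_iff inv_o_cancel)
qed

theorem proposition3p5:
  fixes n j :: nat
  assumes "even n" and "4 \<le> n" and "1 \<le> j" and "j \<le> n - 1"
  shows "(\<forall>x\<in>Y1 n. nu j x \<in> Yj n j)
       \<and> inj_on (nu j) (Y1 n)
       \<and> (\<forall>x\<in>Y1 n. \<forall>y\<in>Y1 n. fpf_bruhat n x y \<longrightarrow> fpf_bruhat n (nu j x) (nu j y))"
proof (intro conjI ballI impI)
  show "nu j x \<in> Yj n j" if "x \<in> Y1 n" for x
    using that by (auto simp: Yj_def nu_def)
  show "inj_on (nu j) (Y1 n)"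
    using inj_nu by (rule inj_on_subset) simp
  show "fpf_bruhat n (nu j x) (nu j y)" if "y \<in> Y1 n" "fpf_bruhat n x y" for x y
  proof -
    have "j < n" using assms by simp
    moreover have "y 1 = 2" using Y1_apply_1[OF _ \<open>y \<in> Y1 n\<close>] assms(2) by simp
    ultimately show ?thesis
      using \<open>fpf_bruhat n x y\<close> nu_fpf_inv rtranclp_bruhat_step_nu \<open>1 \<le> j\<close>
      by (simp add: fpf_bruhat_def)
  qed
qed

end
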